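(* Let $\mathscr G=(\mathscr V,\mathscr E)$ be a finite connected graph with $N$ vertices and $M\ge0$ an integer. The unique stationary distribution $\pi_Z$ of the uniform saving model on $\mathscr C_{N,M}$ is reversible and $$\pi_Z(\xi)=\frac{\mu(\xi)}{\sum_{\eta\in\mathscr C_{N,M}}\mu(\eta)}\quad\text{where}\quad \mu(\xi)=\prod_{z\in\mathscr V}(\xi(z)+1).$$
   Context: $\mathscr C_{N,M}$ is the set of maps $\xi:\mathscr V\to\mathbb N$ with $\sum_x\xi(x)=M$. The uniform saving model is the discrete-time Markov chain on $\mathscr C_{N,M}$: at each step an edge $(x,y)\in\mathscr E$ is chosen uniformly at random; independent $U_1$ uniform on $\{0,\dots,Z_t(x)\}$ and $U_2$ uniform on $\{0,\dots,Z_t(y)\}$ are drawn; given $U_1=c_x,U_2=c_y$, $U$ is drawn uniformly from $\{0,\dots,Z_t(x)+Z_t(y)-c_x-c_y\}$; then $Z_{t+1}(x)=c_x+U$, $Z_{t+1}(y)=Z_t(x)+Z_t(y)-c_x-U$, $Z_{t+1}(z)=Z_t(z)$ for $z\notin\{x,y\}$. This chain has a unique stationary distribution, denoted $\pi_Z$. *)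

theory Defs
  imports Complex_Main
begin

definition configs :: "'a set \<Rightarrow> nat \<Rightarrow> ('a \<Rightarrow> nat) set" where
  "configs V M = {\<xi>. (\<forall>z. z \<notin> V \<longrightarrow> \<xi> z = 0) \<and> (\<Sum>z\<in>V. \<xi> z) = M}"

definition edge_kernel :: "'a \<Rightarrow> 'a \<Rightarrow> ('a \<Rightarrow> nat) \<Rightarrow> ('a \<Rightarrow> nat) \<Rightarrow> real" where
  "edge_kernel x y \<xi> \<eta> =
     (\<Sum>cx\<le>\<xi> x. \<Sum>cy\<le>\<xi> y. \<Sum>u\<le>\<xi> x + \<xi> y - cx - cy.
        if \<eta> = \<xi>(x := cx + u, y := \<xi> x + \<xi> y - cx - u)
        then 1 / (real (\<xi> x + 1) * real (\<xi> y + 1) * real (\<xi> x + \<xi> y - cx - cy + 1))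
        else 0)"

definition usm_kernel :: "('a \<times> 'a) set \<Rightarrow> ('a \<Rightarrow> nat) \<Rightarrow> ('a \<Rightarrow> nat) \<Rightarrow> real" where
  "usm_kernel E \<xi> \<eta> =
     (if E = {} then (if \<xi> = \<eta> then 1 else 0)
      else (\<Sum>(x, y)\<in>E. edge_kernel x y \<xi> \<eta>) / real (card E))"

definition is_distribution :: "('b \<Rightarrow> real) \<Rightarrow> 'b set \<Rightarrow> bool" where
  "is_distribution p S \<longleftrightarrow> (\<forall>s\<in>S. 0 \<le> p s) \<and> (\<Sum>s\<in>S. p s) = 1"

definition is_stationary :: "('b \<Rightarrow> 'b \<Rightarrow> real) \<Rightarrow> ('b \<Rightarrow> real) \<Rightarrow> 'b set \<Rightarrow> bool" where
  "is_stationary P p S \<longleftrightarrow> (\<forall>\<eta>\<in>S. (\<Sum>\<xi>\<in>S. p \<xi> * P \<xi> \<eta>) = p \<eta>)"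

definition is_reversible :: "('b \<Rightarrow> 'b \<Rightarrow> real) \<Rightarrow> ('b \<Rightarrow> real) \<Rightarrow> 'b set \<Rightarrow> bool" where
  "is_reversible P p S \<longleftrightarrow> (\<forall>\<xi>\<in>S. \<forall>\<eta>\<in>S. p \<xi> * P \<xi> \<eta> = p \<eta> * P \<eta> \<xi>)"

definition mu :: "'a set \<Rightarrow> ('a \<Rightarrow> nat) \<Rightarrow> real" where
  "mu V \<xi> = (\<Prod>z\<in>V. real (\<xi> z + 1))"

end

theory Submission
  imports Defs "HOL-Library.FuncSet"
begin

text \<open>Given the edge \<open>(x, y)\<close>, the chain redistributes the mass \<open>\<xi> x + \<xi> y\<close> between \<open>x\<close> and \<open>y\<close>;
  summing out the auxiliary variables, the probability of reaching \<open>\<eta>\<close> is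
  \<open>W / ((\<xi> x + 1) (\<xi> y + 1))\<close> with a weight \<open>W\<close> symmetric in \<open>\<xi>\<close> and \<open>\<eta>\<close>. Hence
  \<open>\<mu> \<xi> P(\<xi>, \<eta>) = \<mu> \<eta> P(\<eta>, \<xi>)\<close>: the chain is reversible for \<open>\<mu>\<close>, so \<open>\<mu>\<close> normalised is
  stationary. Uniqueness: for a stationary \<open>p\<close>, reversibility makes \<open>p / \<pi>\<close> harmonic, and
  by the maximum principle it is constant, because moving single units along the
  connected graph joins any two configurations by transitions of positive probability.\<close>

section \<open>Reversible finite Markov chains\<close>

definition positive_transitions :: "('b \<Rightarrow> 'b \<Rightarrow> real) \<Rightarrow> 'b set \<Rightarrow> ('b \<times> 'b) set" where
  "positive_transitions P S = {(\<xi>, \<eta>). \<xi> \<in> S \<and> \<eta> \<in> S \<and> 0 < P \<xi> \<eta>}"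

lemma reversible_imp_stationary:
  assumes "is_reversible P p S" and "\<forall>\<xi>\<in>S. (\<Sum>\<eta>\<in>S. P \<xi> \<eta>) = 1"
  shows "is_stationary P p S"
  unfolding is_stationary_def
proof
  fix \<eta> assume "\<eta> \<in> S"
  then have "(\<Sum>\<xi>\<in>S. p \<xi> * P \<xi> \<eta>) = (\<Sum>\<xi>\<in>S. p \<eta> * P \<eta> \<xi>)"
    using assms(1) unfolding is_reversible_def by (intro sum.cong) auto
  also have "\<dots> = p \<eta>"
    using assms(2) \<open>\<eta> \<in> S\<close> by (simp add: sum_distrib_left[symmetric])
  finally show "(\<Sum>\<xi>\<in>S. p \<xi> * P \<xi> \<eta>) = p \<eta>" .
qed

lemma harmonic_const_if_irreducible:
  fixes h :: "'b \<Rightarrow> real"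
  assumes "finite S"
    and nonneg: "\<forall>\<xi>\<in>S. \<forall>\<eta>\<in>S. 0 \<le> P \<xi> \<eta>"
    and row: "\<forall>\<xi>\<in>S. (\<Sum>\<eta>\<in>S. P \<xi> \<eta>) = 1"
    and harmonic: "\<forall>\<xi>\<in>S. h \<xi> = (\<Sum>\<eta>\<in>S. P \<xi> \<eta> * h \<eta>)"
    and irreducible: "\<forall>\<xi>\<in>S. \<forall>\<eta>\<in>S. (\<xi>, \<eta>) \<in> (positive_transitions P S)\<^sup>*"
    and "\<xi> \<in> S" "\<eta> \<in> S"
  shows "h \<xi> = h \<eta>"
proof -
  define m where "m = Max (h ` S)"
  have le_m: "h \<zeta> \<le> m" if "\<zeta> \<in> S" for \<zeta>
    unfolding m_def using \<open>finite S\<close> that by auto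
  have max_step: "h \<zeta> = m" if "h \<xi>' = m" "(\<xi>', \<zeta>) \<in> positive_transitions P S"
    for \<xi>' \<zeta>
  proof -
    have "\<xi>' \<in> S" "\<zeta> \<in> S" "0 < P \<xi>' \<zeta>"
      using that(2) unfolding positive_transitions_def by auto
    have "(\<Sum>\<zeta>'\<in>S. P \<xi>' \<zeta>' * (m - h \<zeta>')) = m * (\<Sum>\<zeta>'\<in>S. P \<xi>' \<zeta>') - (\<Sum>\<zeta>'\<in>S. P \<xi>' \<zeta>' * h \<zeta>')"
      by (simp add: right_diff_distrib sum_subtractf sum_distrib_left mult.commute)
    also have "\<dots> = 0"
      using row harmonic \<open>\<xi>' \<in> S\<close> that(1) by simp
    finally have "\<forall>\<zeta>'\<in>S. P \<xi>' \<zeta>' * (m - h \<zeta>') = 0"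
      using \<open>finite S\<close> nonneg le_m \<open>\<xi>' \<in> S\<close> by (subst sum_nonneg_eq_0_iff[symmetric]) auto
    then show ?thesis using \<open>\<zeta> \<in> S\<close> \<open>0 < P \<xi>' \<zeta>\<close> by auto
  qed
  have "m \<in> h ` S" unfolding m_def using \<open>finite S\<close> \<open>\<xi> \<in> S\<close> by (intro Max_in) auto
  then obtain \<xi>0 where "\<xi>0 \<in> S" "h \<xi>0 = m" by auto
  have attains_max: "h \<zeta> = m" if "\<zeta> \<in> S" for \<zeta>
  proof -
    have "(\<xi>0, \<zeta>) \<in> (positive_transitions P S)\<^sup>*"
      using irreducible \<open>\<xi>0 \<in> S\<close> that by blast
    then show ?thesis
      by (induction rule: rtrancl_induct) (use \<open>h \<xi>0 = m\<close> max_step in auto)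
  qed
  show ?thesis using attains_max \<open>\<xi> \<in> S\<close> \<open>\<eta> \<in> S\<close> by simp
qed

lemma reversible_stationary_unique:
  fixes \<pi> p :: "'b \<Rightarrow> real"
  assumes "finite S"
    and nonneg: "\<forall>\<xi>\<in>S. \<forall>\<eta>\<in>S. 0 \<le> P \<xi> \<eta>"
    and row: "\<forall>\<xi>\<in>S. (\<Sum>\<eta>\<in>S. P \<xi> \<eta>) = 1"
    and irreducible: "\<forall>\<xi>\<in>S. \<forall>\<eta>\<in>S. (\<xi>, \<eta>) \<in> (positive_transitions P S)\<^sup>*"
    and \<pi>_pos: "\<forall>\<xi>\<in>S. 0 < \<pi> \<xi>"
    and "is_distribution \<pi> S" "is_reversible P \<pi> S"
    and "is_distribution p S" "is_stationary P p S"
  shows "\<forall>\<xi>\<in>S. p \<xi> = \<pi> \<xi>"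
proof
  define h where "h \<xi> = p \<xi> / \<pi> \<xi>" for \<xi>
  have p_eq: "p \<xi> = h \<xi> * \<pi> \<xi>" if "\<xi> \<in> S" for \<xi>
    using \<pi>_pos that by (simp add: h_def less_imp_neq[symmetric])
  have harmonic: "\<forall>\<eta>\<in>S. h \<eta> = (\<Sum>\<xi>\<in>S. P \<eta> \<xi> * h \<xi>)"
  proof
    fix \<eta> assume "\<eta> \<in> S"
    have "h \<eta> * \<pi> \<eta> = (\<Sum>\<xi>\<in>S. h \<xi> * (\<pi> \<xi> * P \<xi> \<eta>))"
      using \<open>is_stationary P p S\<close> \<open>\<eta> \<in> S\<close> p_eq unfolding is_stationary_def
      by (simp add: mult.assoc)
    also have "\<dots> = (\<Sum>\<xi>\<in>S. h \<xi> * (\<pi> \<eta> * P \<eta> \<xi>))"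
      using \<open>is_reversible P \<pi> S\<close> \<open>\<eta> \<in> S\<close> unfolding is_reversible_def by (intro sum.cong) auto
    also have "\<dots> = (\<Sum>\<xi>\<in>S. P \<eta> \<xi> * h \<xi>) * \<pi> \<eta>"
      by (simp add: sum_distrib_left mult_ac)
    finally have "h \<eta> * \<pi> \<eta> = (\<Sum>\<xi>\<in>S. P \<eta> \<xi> * h \<xi>) * \<pi> \<eta>" .
    moreover have "\<pi> \<eta> \<noteq> 0" using \<pi>_pos \<open>\<eta> \<in> S\<close> by auto
    ultimately show "h \<eta> = (\<Sum>\<xi>\<in>S. P \<eta> \<xi> * h \<xi>)" by simp
  qed
  fix \<xi> assume "\<xi> \<in> S"
  have "1 = (\<Sum>\<eta>\<in>S. p \<eta>)"
    using \<open>is_distribution p S\<close> unfolding is_distribution_def by simp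
  also have "\<dots> = (\<Sum>\<eta>\<in>S. h \<xi> * \<pi> \<eta>)"
  proof (rule sum.cong[OF refl])
    fix \<eta> assume "\<eta> \<in> S"
    have "h \<eta> = h \<xi>"
      using harmonic_const_if_irreducible[OF \<open>finite S\<close> nonneg row harmonic irreducible \<open>\<eta> \<in> S\<close> \<open>\<xi> \<in> S\<close>] .
    then show "p \<eta> = h \<xi> * \<pi> \<eta>" using p_eq \<open>\<eta> \<in> S\<close> by simp
  qed
  also have "\<dots> = h \<xi>"
    using \<open>is_distribution \<pi> S\<close> by (simp add: is_distribution_def sum_distrib_left[symmetric])
  finally show "p \<xi> = \<pi> \<xi>" using p_eq \<open>\<xi> \<in> S\<close> by simp
qed

definition redistributes :: "'a \<Rightarrow> 'a \<Rightarrow> ('a \<Rightarrow> nat) \<Rightarrow> ('a \<Rightarrow> nat) \<Rightarrow> bool" where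
  "redistributes x y \<xi> \<eta> \<longleftrightarrow> (\<forall>z. z \<noteq> x \<and> z \<noteq> y \<longrightarrow> \<eta> z = \<xi> z) \<and> \<eta> x + \<eta> y = \<xi> x + \<xi> y"

lemma redistributes_sym: "redistributes x y \<xi> \<eta> \<longleftrightarrow> redistributes x y \<eta> \<xi>"
  by (auto simp: redistributes_def)

lemma redistributes_swap: "redistributes y x \<xi> \<eta> \<longleftrightarrow> redistributes x y \<xi> \<eta>"
  by (auto simp: redistributes_def)

lemma configs_redistributes:
  assumes "\<xi> \<in> configs V M" "finite V" "x \<in> V" "y \<in> V" "x \<noteq> y" "redistributes x y \<xi> \<eta>"
  shows "\<eta> \<in> configs V M"
proof -
  have sum_split: "(\<Sum>z\<in>V. f z) = (\<Sum>z\<in>V - {x, y}. f z) + f x + f y" for f :: "'a \<Rightarrow> nat"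
    using assms(2-5) by (simp add: sum.subset_diff[of "{x, y}" V])
  have "(\<Sum>z\<in>V - {x, y}. \<eta> z) = (\<Sum>z\<in>V - {x, y}. \<xi> z)"
    using assms(6) by (intro sum.cong) (auto simp: redistributes_def)
  then have "(\<Sum>z\<in>V. \<eta> z) = (\<Sum>z\<in>V. \<xi> z)"
    using assms(6) by (simp add: sum_split redistributes_def add.assoc)
  then show ?thesis
    using assms(1,3,4,6) unfolding configs_def redistributes_def by auto
qed

lemma configs_finite:
  assumes "finite V"
  shows "finite (configs V M)"
proof -
  let ?ext = "\<lambda>f z. if z \<in> V then f z else 0"
  have "configs V M \<subseteq> ?ext ` (PiE V (\<lambda>_. {..M}))"
  proof
    fix \<xi> assume \<xi>: "\<xi> \<in> configs V M"
    have "\<xi> z \<le> M" if "z \<in> V" for z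
      using member_le_sum[of z V \<xi>] \<xi> that assms unfolding configs_def by auto
    then have "restrict \<xi> V \<in> PiE V (\<lambda>_. {..M})" by auto
    moreover have "\<xi> = ?ext (restrict \<xi> V)"
      using \<xi> unfolding configs_def by auto
    ultimately show "\<xi> \<in> ?ext ` (PiE V (\<lambda>_. {..M}))" by blast
  qed
  then show ?thesis
    by (rule finite_subset) (intro finite_imageI finite_PiE assms, auto)
qed

lemma configs_nonempty:
  assumes "finite V" "V \<noteq> {}"
  shows "configs V M \<noteq> {}"
proof -
  obtain v where "v \<in> V" using assms by auto
  then have "(\<lambda>z. if z = v then M else 0) \<in> configs V M"
    using assms unfolding configs_def by (auto simp: sum.delta)
  then show ?thesis by auto
qed

lemma mu_pos: "0 < mu V \<xi>"
  unfolding mu_def by (intro prod_pos) auto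

lemma mu_split:
  assumes "finite V" "x \<in> V" "y \<in> V" "x \<noteq> y"
  shows "mu V \<xi> = real (\<xi> x + 1) * real (\<xi> y + 1) * (\<Prod>z\<in>V - {x, y}. real (\<xi> z + 1))"
  using assms unfolding mu_def by (simp add: prod.subset_diff[of "{x, y}" V] mult_ac)

section \<open>The kernel of a single edge\<close>

definition saving_weight :: "nat \<Rightarrow> nat \<Rightarrow> nat \<Rightarrow> real" where
  "saving_weight s a b = (\<Sum>cx\<le>a. \<Sum>cy\<le>b. 1 / real (s - cx - cy + 1))"

lemma saving_weight_pos: "0 < saving_weight s a b"
  unfolding saving_weight_def by (intro sum_pos) auto

lemma sum_atMost_if_le:
  fixes f :: "nat \<Rightarrow> 'b::comm_monoid_add"
  shows "(\<Sum>c\<le>a. if c \<le> b then f c else 0) = (\<Sum>c\<le>min a b. f c)"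
proof -
  have "{c \<in> {..a}. c \<le> b} = {..min a b}" by auto
  then show ?thesis using sum.inter_filter[of "{..a}" f "\<lambda>c. c \<le> b"] by simp
qed

text \<open>For fixed saved amounts \<open>cx, cy\<close>, exactly one value \<open>u = \<eta> x - cx\<close> of the shared part
  leads to \<open>\<eta>\<close>, and it lies in the admissible range iff \<open>cy \<le> \<eta> y\<close>.\<close>
lemma sum_update_indicator:
  assumes "x \<noteq> y" "cx \<le> \<xi> x" "cy \<le> \<xi> y"
  shows "(\<Sum>u\<le>\<xi> x + \<xi> y - cx - cy. if \<eta> = \<xi>(x := cx + u, y := \<xi> x + \<xi> y - cx - u) then c else 0)
    = (if redistributes x y \<xi> \<eta> \<and> cx \<le> \<eta> x \<and> cy \<le> \<eta> y then c else (0::real))"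
proof -
  have "(\<eta> = \<xi>(x := cx + u, y := \<xi> x + \<xi> y - cx - u))
      \<longleftrightarrow> (redistributes x y \<xi> \<eta> \<and> cx \<le> \<eta> x) \<and> u = \<eta> x - cx"
    if "u \<le> \<xi> x + \<xi> y - cx - cy" for u
  proof
    assume "\<eta> = \<xi>(x := cx + u, y := \<xi> x + \<xi> y - cx - u)"
    then have "\<eta> x = cx + u" "\<eta> y = \<xi> x + \<xi> y - cx - u" "\<forall>z. z \<noteq> x \<and> z \<noteq> y \<longrightarrow> \<eta> z = \<xi> z"
      using assms(1) by auto
    then show "(redistributes x y \<xi> \<eta> \<and> cx \<le> \<eta> x) \<and> u = \<eta> x - cx"
      using that assms(2,3) unfolding redistributes_def by auto
  next
    assume "(redistributes x y \<xi> \<eta> \<and> cx \<le> \<eta> x) \<and> u = \<eta> x - cx"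
    then show "\<eta> = \<xi>(x := cx + u, y := \<xi> x + \<xi> y - cx - u)"
      using assms(1) unfolding redistributes_def by (auto simp: fun_eq_iff)
  qed
  then have "(\<Sum>u\<le>\<xi> x + \<xi> y - cx - cy. if \<eta> = \<xi>(x := cx + u, y := \<xi> x + \<xi> y - cx - u) then c else 0)
      = (\<Sum>u\<le>\<xi> x + \<xi> y - cx - cy. if redistributes x y \<xi> \<eta> \<and> cx \<le> \<eta> x then (if u = \<eta> x - cx then c else 0) else 0)"
    by (intro sum.cong) auto
  also have "\<dots> = (if redistributes x y \<xi> \<eta> \<and> cx \<le> \<eta> x \<and> \<eta> x - cx \<le> \<xi> x + \<xi> y - cx - cy then c else 0)"
    by (cases "redistributes x y \<xi> \<eta> \<and> cx \<le> \<eta> x") (auto simp: sum.delta)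
  also have "\<dots> = (if redistributes x y \<xi> \<eta> \<and> cx \<le> \<eta> x \<and> cy \<le> \<eta> y then c else 0)"
    using assms by (auto simp: redistributes_def)
  finally show ?thesis .
qed

lemma edge_kernel_eq:
  assumes "x \<noteq> y"
  shows "edge_kernel x y \<xi> \<eta> =
    (if redistributes x y \<xi> \<eta>
     then saving_weight (\<xi> x + \<xi> y) (min (\<xi> x) (\<eta> x)) (min (\<xi> y) (\<eta> y)) / (real (\<xi> x + 1) * real (\<xi> y + 1))
     else 0)"
proof -
  define w where "w cx cy = 1 / (real (\<xi> x + 1) * real (\<xi> y + 1) * real (\<xi> x + \<xi> y - cx - cy + 1))" for cx cy
  have "edge_kernel x y \<xi> \<eta>
      = (\<Sum>cx\<le>\<xi> x. \<Sum>cy\<le>\<xi> y. if redistributes x y \<xi> \<eta> \<and> cx \<le> \<eta> x \<and> cy \<le> \<eta> y then w cx cy else 0)"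
    unfolding edge_kernel_def w_def using sum_update_indicator[OF assms] by (intro sum.cong) auto
  also have "\<dots> = (if redistributes x y \<xi> \<eta>
     then saving_weight (\<xi> x + \<xi> y) (min (\<xi> x) (\<eta> x)) (min (\<xi> y) (\<eta> y)) / (real (\<xi> x + 1) * real (\<xi> y + 1))
     else 0)"
  proof (cases "redistributes x y \<xi> \<eta>")
    case True
    have "(\<Sum>cx\<le>\<xi> x. \<Sum>cy\<le>\<xi> y. if redistributes x y \<xi> \<eta> \<and> cx \<le> \<eta> x \<and> cy \<le> \<eta> y then w cx cy else 0)
        = (\<Sum>cx\<le>\<xi> x. if cx \<le> \<eta> x then (\<Sum>cy\<le>\<xi> y. if cy \<le> \<eta> y then w cx cy else 0) else 0)"
      using True by (intro sum.cong) auto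
    also have "\<dots> = (\<Sum>cx\<le>min (\<xi> x) (\<eta> x). \<Sum>cy\<le>min (\<xi> y) (\<eta> y). w cx cy)"
      by (simp only: sum_atMost_if_le)
    finally show ?thesis
      using True by (simp add: w_def saving_weight_def sum_divide_distrib mult_ac)
  qed simp
  finally show ?thesis .
qed

lemma edge_kernel_nonneg: "0 \<le> edge_kernel x y \<xi> \<eta>"
  unfolding edge_kernel_def by (intro sum_nonneg) auto

lemma edge_kernel_pos:
  assumes "x \<noteq> y" "redistributes x y \<xi> \<eta>"
  shows "0 < edge_kernel x y \<xi> \<eta>"
  using assms saving_weight_pos by (simp add: edge_kernel_eq)

lemma mu_edge_kernel_symmetric:
  assumes "finite V" "x \<in> V" "y \<in> V" "x \<noteq> y"
  shows "mu V \<xi> * edge_kernel x y \<xi> \<eta> = mu V \<eta> * edge_kernel x y \<eta> \<xi>"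
proof (cases "redistributes x y \<xi> \<eta>")
  case True
  then have "(\<Prod>z\<in>V - {x, y}. real (\<xi> z + 1)) = (\<Prod>z\<in>V - {x, y}. real (\<eta> z + 1))"
    by (intro prod.cong) (auto simp: redistributes_def)
  moreover have "saving_weight (\<xi> x + \<xi> y) (min (\<xi> x) (\<eta> x)) (min (\<xi> y) (\<eta> y))
      = saving_weight (\<eta> x + \<eta> y) (min (\<eta> x) (\<xi> x)) (min (\<eta> y) (\<xi> y))"
    using True by (simp add: redistributes_def min.commute)
  ultimately show ?thesis
    using True assms by (simp add: edge_kernel_eq mu_split redistributes_sym[of x y \<eta>])
next
  case False
  then show ?thesis
    using assms by (simp add: edge_kernel_eq redistributes_sym[of x y \<eta>])
qed

lemma edge_kernel_row_sum:
  assumes "finite V" "x \<in> V" "y \<in> V" "x \<noteq> y" "\<xi> \<in> configs V M"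
  shows "(\<Sum>\<eta>\<in>configs V M. edge_kernel x y \<xi> \<eta>) = 1"
proof -
  let ?C = "configs V M"
  define F where "F cx u = \<xi>(x := cx + u, y := \<xi> x + \<xi> y - cx - u)" for cx u
  define w where "w cx cy = 1 / (real (\<xi> x + 1) * real (\<xi> y + 1) * real (\<xi> x + \<xi> y - cx - cy + 1))" for cx cy
  have F_configs: "F cx u \<in> ?C" if "cx \<le> \<xi> x" "cy \<le> \<xi> y" "u \<le> \<xi> x + \<xi> y - cx - cy" for cx cy u
  proof (rule configs_redistributes[OF assms(5,1-4)])
    show "redistributes x y \<xi> (F cx u)"
      using assms(4) that unfolding redistributes_def F_def by auto
  qed
  have "(\<Sum>\<eta>\<in>?C. edge_kernel x y \<xi> \<eta>)
      = (\<Sum>cx\<le>\<xi> x. \<Sum>cy\<le>\<xi> y. \<Sum>u\<le>\<xi> x + \<xi> y - cx - cy. \<Sum>\<eta>\<in>?C. if \<eta> = F cx u then w cx cy else 0)"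
    unfolding edge_kernel_def F_def w_def
    by (subst sum.swap[where A = ?C], rule sum.cong[OF refl], subst sum.swap[where A = ?C],
        rule sum.cong[OF refl], subst sum.swap[where A = ?C], rule refl)
  also have "\<dots> = (\<Sum>cx\<le>\<xi> x. \<Sum>cy\<le>\<xi> y. \<Sum>u\<le>\<xi> x + \<xi> y - cx - cy. w cx cy)"
  proof (intro sum.cong refl)
    fix cx cy u assume "cx \<in> {..\<xi> x}" "cy \<in> {..\<xi> y}" "u \<in> {..\<xi> x + \<xi> y - cx - cy}"
    then have "F cx u \<in> ?C" using F_configs by simp
    then show "(\<Sum>\<eta>\<in>?C. if \<eta> = F cx u then w cx cy else 0) = w cx cy"
      using configs_finite[OF assms(1)] by (simp add: sum.delta)
  qed
  also have "\<dots> = (\<Sum>cx\<le>\<xi> x. \<Sum>cy\<le>\<xi> y. 1 / (real (\<xi> x + 1) * real (\<xi> y + 1)))"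
    by (intro sum.cong refl) (simp add: w_def)
  also have "\<dots> = 1"
    by simp
  finally show ?thesis .
qed

lemma usm_kernel_nonneg: "0 \<le> usm_kernel E \<xi> \<eta>"
  unfolding usm_kernel_def
  by (auto intro!: sum_nonneg divide_nonneg_nonneg simp: edge_kernel_nonneg split: prod.splits)

lemma usm_kernel_row_sum:
  assumes "finite V" "E \<subseteq> V \<times> V" "\<forall>(x, y)\<in>E. x \<noteq> y" "\<xi> \<in> configs V M"
  shows "(\<Sum>\<eta>\<in>configs V M. usm_kernel E \<xi> \<eta>) = 1"
proof (cases "E = {}")
  case True
  then show ?thesis
    using assms(4) configs_finite[OF assms(1)] by (simp add: usm_kernel_def)
next
  case False
  have "finite E" using assms(1,2) finite_subset by blast
  have "(\<Sum>\<eta>\<in>configs V M. \<Sum>(x, y)\<in>E. edge_kernel x y \<xi> \<eta>)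
      = (\<Sum>e\<in>E. \<Sum>\<eta>\<in>configs V M. case e of (x, y) \<Rightarrow> edge_kernel x y \<xi> \<eta>)"
    by (rule sum.swap)
  also have "\<dots> = (\<Sum>e\<in>E. 1)"
  proof (rule sum.cong[OF refl])
    fix e assume "e \<in> E"
    moreover obtain x y where "e = (x, y)" by fastforce
    ultimately show "(\<Sum>\<eta>\<in>configs V M. case e of (x, y) \<Rightarrow> edge_kernel x y \<xi> \<eta>) = 1"
      using assms edge_kernel_row_sum[of V x y \<xi> M] by auto
  qed
  finally have "(\<Sum>\<eta>\<in>configs V M. \<Sum>(x, y)\<in>E. edge_kernel x y \<xi> \<eta>) = card E" by simp
  then show ?thesis
    using False \<open>finite E\<close> by (simp add: usm_kernel_def sum_divide_distrib[symmetric])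
qed

lemma mu_usm_kernel_symmetric:
  assumes "finite V" "E \<subseteq> V \<times> V" "\<forall>(x, y)\<in>E. x \<noteq> y"
  shows "mu V \<xi> * usm_kernel E \<xi> \<eta> = mu V \<eta> * usm_kernel E \<eta> \<xi>"
proof -
  have "mu V \<xi> * (\<Sum>(x, y)\<in>E. edge_kernel x y \<xi> \<eta>) = mu V \<eta> * (\<Sum>(x, y)\<in>E. edge_kernel x y \<eta> \<xi>)"
    unfolding sum_distrib_left
  proof (rule sum.cong[OF refl])
    fix e assume "e \<in> E"
    moreover obtain x y where "e = (x, y)" by fastforce
    ultimately show "mu V \<xi> * (case e of (x, y) \<Rightarrow> edge_kernel x y \<xi> \<eta>)
        = mu V \<eta> * (case e of (x, y) \<Rightarrow> edge_kernel x y \<eta> \<xi>)"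
      using assms mu_edge_kernel_symmetric[of V x y] by auto
  qed
  then show ?thesis by (simp add: usm_kernel_def)
qed

lemma usm_kernel_pos:
  assumes "finite E" "\<forall>(x, y)\<in>E. x \<noteq> y" "(v, w) \<in> E \<union> E\<inverse>" "redistributes v w \<xi> \<eta>"
  shows "0 < usm_kernel E \<xi> \<eta>"
proof -
  obtain x y where xy: "(x, y) \<in> E" "redistributes x y \<xi> \<eta>"
  proof (cases "(v, w) \<in> E")
    case False
    then have "(w, v) \<in> E" using assms(3) by auto
    then show ?thesis using that assms(4) by (simp add: redistributes_swap)
  qed (use that assms(4) in blast)
  then have "0 < edge_kernel x y \<xi> \<eta>"
    using assms(2) edge_kernel_pos by fast
  also have "\<dots> \<le> (\<Sum>(x, y)\<in>E. edge_kernel x y \<xi> \<eta>)"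
    using member_le_sum[of "(x, y)" E "\<lambda>(x, y). edge_kernel x y \<xi> \<eta>"] xy(1) assms(1)
    by (simp add: edge_kernel_nonneg split_def)
  finally show ?thesis
    using xy(1) assms(1) by (auto simp: usm_kernel_def card_gt_0_iff)
qed

section \<open>Irreducibility\<close>

definition move_unit :: "('a \<Rightarrow> nat) \<Rightarrow> 'a \<Rightarrow> 'a \<Rightarrow> 'a \<Rightarrow> nat" where
  "move_unit \<xi> v w = (\<lambda>t. \<xi> t - (if t = v then 1 else 0) + (if t = w then 1 else 0))"

lemma move_unit_self: "0 < \<xi> v \<Longrightarrow> move_unit \<xi> v v = \<xi>"
  by (auto simp: move_unit_def)

lemma move_unit_move_unit: "move_unit (move_unit \<xi> z v) v w = move_unit \<xi> z w"
  by (auto simp: move_unit_def)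

lemma redistributes_move_unit: "0 < \<xi> v \<Longrightarrow> redistributes v w \<xi> (move_unit \<xi> v w)"
  by (auto simp: move_unit_def redistributes_def)

lemma move_unit_configs:
  assumes "finite V" "\<xi> \<in> configs V M" "v \<in> V" "w \<in> V" "0 < \<xi> v"
  shows "move_unit \<xi> v w \<in> configs V M"
proof (cases "v = w")
  case True
  then show ?thesis using assms(2,5) by (simp add: move_unit_self)
next
  case False
  show ?thesis
    by (rule configs_redistributes[OF assms(2,1,3,4) False redistributes_move_unit[of \<xi> v w, OF assms(5)]])
qed

lemma configs_excess:
  assumes "finite V" "\<xi> \<in> configs V M" "\<eta> \<in> configs V M" "\<xi> \<noteq> \<eta>"
  shows "\<exists>z\<in>V. \<eta> z < \<xi> z"
proof (rule ccontr)
  assume "\<not> (\<exists>z\<in>V. \<eta> z < \<xi> z)"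
  then have le: "\<forall>z\<in>V. \<xi> z \<le> \<eta> z" by auto
  obtain t where "\<xi> t \<noteq> \<eta> t" using assms(4) by auto
  moreover have "t \<in> V"
  proof (rule ccontr)
    assume "t \<notin> V"
    then show False using \<open>\<xi> t \<noteq> \<eta> t\<close> assms(2,3) unfolding configs_def by simp
  qed
  ultimately have "(\<Sum>z\<in>V. \<xi> z) < (\<Sum>z\<in>V. \<eta> z)"
    using le assms(1) by (intro sum_strict_mono_ex1) (auto simp: order.strict_iff_order)
  then show False using assms(2,3) unfolding configs_def by simp
qed

lemma move_unit_decreases_distance:
  assumes "finite V" "z \<in> V" "\<eta> z < \<xi> z" "\<xi> w < \<eta> w"
  shows "(\<Sum>t\<in>V. move_unit \<xi> z w t - \<eta> t) < (\<Sum>t\<in>V. \<xi> t - \<eta> t)"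
proof (rule sum_strict_mono_ex1[OF assms(1)])
  have "z \<noteq> w" using assms(3,4) by auto
  have "move_unit \<xi> z w t - \<eta> t \<le> \<xi> t - \<eta> t" for t
    using assms(4) by (cases "t = w") (simp_all add: move_unit_def)
  then show "\<forall>t\<in>V. move_unit \<xi> z w t - \<eta> t \<le> \<xi> t - \<eta> t" by blast
  have "move_unit \<xi> z w z - \<eta> z < \<xi> z - \<eta> z"
    using assms(3) \<open>z \<noteq> w\<close> by (simp add: move_unit_def)
  then show "\<exists>t\<in>V. move_unit \<xi> z w t - \<eta> t < \<xi> t - \<eta> t"
    using assms(2) by blast
qed

text \<open>Moving a unit along a path of \<open>G\<close> from a site with excess to a site with deficit
  strictly decreases \<open>\<Sum>t\<in>V. \<xi> t - \<eta> t\<close>.\<close>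
lemma configs_connected_by_unit_moves:
  assumes "finite V" "G \<subseteq> V \<times> V" and connected: "\<forall>x\<in>V. \<forall>y\<in>V. (x, y) \<in> G\<^sup>*"
    and unit_move: "\<And>\<zeta> v w. \<zeta> \<in> configs V M \<Longrightarrow> (v, w) \<in> G \<Longrightarrow> 0 < \<zeta> v \<Longrightarrow> (\<zeta>, move_unit \<zeta> v w) \<in> T"
    and "\<xi> \<in> configs V M" "\<eta> \<in> configs V M"
  shows "(\<xi>, \<eta>) \<in> T\<^sup>*"
proof -
  have along_path: "w \<in> V \<and> (\<zeta>, move_unit \<zeta> z w) \<in> T\<^sup>*"
    if "(z, w) \<in> G\<^sup>*" "\<zeta> \<in> configs V M" "z \<in> V" "0 < \<zeta> z" for \<zeta> z w
    using that(1)
  proof (induction rule: rtrancl_induct)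
    case base
    then show ?case using that(3,4) by (simp add: move_unit_self)
  next
    case (step v w)
    have "v \<in> V" "w \<in> V" using step.IH step.hyps(2) assms(2) by auto
    have "move_unit \<zeta> z v \<in> configs V M"
      using move_unit_configs[OF assms(1) that(2,3) \<open>v \<in> V\<close> that(4)] .
    moreover have "0 < move_unit \<zeta> z v v" by (simp add: move_unit_def)
    ultimately have "(move_unit \<zeta> z v, move_unit (move_unit \<zeta> z v) v w) \<in> T"
      by (rule unit_move[OF _ step.hyps(2)])
    then have "(move_unit \<zeta> z v, move_unit \<zeta> z w) \<in> T"
      by (simp only: move_unit_move_unit)
    then show ?case using step.IH \<open>w \<in> V\<close> by auto
  qed
  show ?thesis
    using assms(5)
  proof (induction "\<Sum>t\<in>V. \<xi> t - \<eta> t" arbitrary: \<xi> rule: less_induct)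
    case less
    show ?case
    proof (cases "\<xi> = \<eta>")
      case False
      obtain z where "z \<in> V" "\<eta> z < \<xi> z"
        using configs_excess[OF assms(1) less.prems assms(6) False] by blast
      have "\<eta> \<noteq> \<xi>" using False by simp
      then obtain w where "w \<in> V" "\<xi> w < \<eta> w"
        using configs_excess[OF assms(1) assms(6) less.prems] by blast
      have "(z, w) \<in> G\<^sup>*" using connected \<open>z \<in> V\<close> \<open>w \<in> V\<close> by blast
      then have "(\<xi>, move_unit \<xi> z w) \<in> T\<^sup>*"
        using along_path[OF _ less.prems \<open>z \<in> V\<close>] \<open>\<eta> z < \<xi> z\<close> by simp
      also have "(move_unit \<xi> z w, \<eta>) \<in> T\<^sup>*"
      proof (rule less.hyps)
        show "(\<Sum>t\<in>V. move_unit \<xi> z w t - \<eta> t) < (\<Sum>t\<in>V. \<xi> t - \<eta> t)"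
          using move_unit_decreases_distance[OF assms(1) \<open>z \<in> V\<close> \<open>\<eta> z < \<xi> z\<close> \<open>\<xi> w < \<eta> w\<close>] .
        show "move_unit \<xi> z w \<in> configs V M"
          using move_unit_configs[OF assms(1) less.prems \<open>z \<in> V\<close> \<open>w \<in> V\<close>] \<open>\<eta> z < \<xi> z\<close> by simp
      qed
      finally show ?thesis .
    qed (simp only: rtrancl.rtrancl_refl)
  qed
qed

lemma usm_kernel_irreducible:
  assumes "finite V" "E \<subseteq> V \<times> V" "\<forall>(x, y)\<in>E. x \<noteq> y"
    and connected: "\<forall>x\<in>V. \<forall>y\<in>V. (x, y) \<in> (E \<union> E\<inverse>)\<^sup>*"
  shows "\<forall>\<xi>\<in>configs V M. \<forall>\<eta>\<in>configs V M.
    (\<xi>, \<eta>) \<in> (positive_transitions (usm_kernel E) (configs V M))\<^sup>*"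
proof (intro ballI)
  fix \<xi> \<eta> assume "\<xi> \<in> configs V M" "\<eta> \<in> configs V M"
  have "finite E" using assms(1,2) finite_subset by blast
  have "E \<union> E\<inverse> \<subseteq> V \<times> V" using assms(2) by auto
  then show "(\<xi>, \<eta>) \<in> (positive_transitions (usm_kernel E) (configs V M))\<^sup>*"
  proof (rule configs_connected_by_unit_moves[OF assms(1) _ connected _ \<open>\<xi> \<in> configs V M\<close> \<open>\<eta> \<in> configs V M\<close>])
    fix \<zeta> v w assume "\<zeta> \<in> configs V M" "(v, w) \<in> E \<union> E\<inverse>" "0 < \<zeta> v"
    then have "v \<in> V" "w \<in> V" using assms(2) by auto
    have "move_unit \<zeta> v w \<in> configs V M"
      by (rule move_unit_configs[OF assms(1) \<open>\<zeta> \<in> configs V M\<close> \<open>v \<in> V\<close> \<open>w \<in> V\<close> \<open>0 < \<zeta> v\<close>])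
    moreover have "0 < usm_kernel E \<zeta> (move_unit \<zeta> v w)"
      by (rule usm_kernel_pos[OF \<open>finite E\<close> assms(3) \<open>(v, w) \<in> E \<union> E\<inverse>\<close>
            redistributes_move_unit[of \<zeta> v w, OF \<open>0 < \<zeta> v\<close>]])
    ultimately show "(\<zeta>, move_unit \<zeta> v w) \<in> positive_transitions (usm_kernel E) (configs V M)"
      using \<open>\<zeta> \<in> configs V M\<close> by (simp add: positive_transitions_def)
  qed
qed

theorem lemma6:
  fixes V :: "'a set" and E :: "('a \<times> 'a) set" and M :: nat
  assumes "finite V" and "V \<noteq> {}"
    and "E \<subseteq> V \<times> V" and "\<forall>(x, y)\<in>E. x \<noteq> y"
    and "\<forall>x\<in>V. \<forall>y\<in>V. (x, y) \<in> (E \<union> E\<inverse>)\<^sup>*"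
  shows "let \<pi> = (\<lambda>\<xi>. mu V \<xi> / (\<Sum>\<eta>\<in>configs V M. mu V \<eta>)) in
           is_distribution \<pi> (configs V M)
         \<and> is_stationary (usm_kernel E) \<pi> (configs V M)
         \<and> is_reversible (usm_kernel E) \<pi> (configs V M)
         \<and> (\<forall>p. is_distribution p (configs V M) \<and> is_stationary (usm_kernel E) p (configs V M)
                \<longrightarrow> (\<forall>\<xi>\<in>configs V M. p \<xi> = \<pi> \<xi>))"
proof -
  let ?C = "configs V M" and ?P = "usm_kernel E"
  define Z where "Z = (\<Sum>\<eta>\<in>?C. mu V \<eta>)"
  define \<pi> where "\<pi> \<xi> = mu V \<xi> / Z" for \<xi>
  have "finite ?C" using configs_finite[OF assms(1)] .
  have "0 < Z"
    unfolding Z_def using \<open>finite ?C\<close> configs_nonempty[OF assms(1,2)] mu_pos by (intro sum_pos) auto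
  have \<pi>_pos: "\<forall>\<xi>\<in>?C. 0 < \<pi> \<xi>"
    using \<open>0 < Z\<close> by (auto simp: \<pi>_def intro!: divide_pos_pos mu_pos)
  have distribution: "is_distribution \<pi> ?C"
    using \<pi>_pos \<open>0 < Z\<close> by (auto simp: is_distribution_def \<pi>_def Z_def sum_divide_distrib[symmetric])
  have reversible: "is_reversible ?P \<pi> ?C"
    using mu_usm_kernel_symmetric[OF assms(1,3,4)] by (simp add: is_reversible_def \<pi>_def)
  have row: "\<forall>\<xi>\<in>?C. (\<Sum>\<eta>\<in>?C. ?P \<xi> \<eta>) = 1"
    using usm_kernel_row_sum[OF assms(1,3,4)] by blast
  have stationary: "is_stationary ?P \<pi> ?C"
    using reversible_imp_stationary[OF reversible row] .
  have "\<forall>\<xi>\<in>?C. p \<xi> = \<pi> \<xi>" if "is_distribution p ?C" "is_stationary ?P p ?C" for p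
    using reversible_stationary_unique[OF \<open>finite ?C\<close> _ row usm_kernel_irreducible[OF assms(1,3,4,5)]
        \<pi>_pos distribution reversible that] usm_kernel_nonneg by blast
  then show ?thesis
    using distribution stationary reversible unfolding Let_def \<pi>_def Z_def by blast
qed

end
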